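(* Let $A\in\mathbb{R}^{n\times n}$, let $s$ be an integer with $1\leq s<d(A)$, and let $v_0\in\mathbb{R}^n$ with $\|v_0\|=1$ and $d(A,v_0)\geq s+1$. Then the normalized vectors of the Arnoldi cross iteration ACI($s$) started at $v_0$ satisfy $$\lim_{k\to\infty}\|w_{k+1}-w_k\|=0\quad\text{and}\quad\lim_{k\to\infty}\|v_{k+1}-v_k\|=0.$$
   Context: Notation: for $A\in\mathbb{R}^{n\times n}$, $d(A)$ is the degree of the minimal polynomial of $A$, $d(A,v)$ is the grade of $v$ w.r.t. $A$ (degree of the monic polynomial $p$ of smallest degree with $p(A)v=0$), $\mathcal{K}_k(A,v)=\mathrm{span}\{v,Av,\dots,A^{k-1}v\}$, $\mathcal{M}_s$ is the set of real monic polynomials of degree $s$, and $\|\cdot\|$ is the Euclidean norm. For a matrix $B$ and a vector $u$ with $d(B,u)\geq s$, let $P_s(\cdot\,;u)\in\mathcal{M}_s$ (determined with respect to $B$) be the unique monic polynomial with $P_s(B;u)u\perp\mathcal{K}_s(B,u)$. The Arnoldi cross iteration ACI($s$) started at $v_0$ is: for $k=0,1,2,\dots$: $\widetilde w_k=P_s(A;v_k)v_k$ (w.r.t. $A$), $w_k=\widetilde w_k/\|\widetilde w_k\|$, $\widetilde v_{k+1}=P_s(A^T;w_k)w_k$ (w.r.t. $A^T$), $v_{k+1}=\widetilde v_{k+1}/\|\widetilde v_{k+1}\|$. (Under the stated hypotheses all these vectors are nonzero.) *)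

theory Defs
  imports "HOL-Analysis.Analysis" "HOL-Computational_Algebra.Polynomial"
begin

definition matpow :: "real^'n^'n \<Rightarrow> nat \<Rightarrow> real^'n^'n" where
  "matpow A i = ((\<lambda>M. A ** M) ^^ i) (mat 1)"

definition poly_mat :: "real poly \<Rightarrow> real^'n^'n \<Rightarrow> real^'n^'n" where
  "poly_mat p A = (\<Sum>i\<le>degree p. coeff p i *\<^sub>R matpow A i)"

definition monic_deg :: "nat \<Rightarrow> real poly set" where
  "monic_deg s = {p. degree p = s \<and> lead_coeff p = 1}"

definition min_poly_deg :: "real^'n^'n \<Rightarrow> nat" where
  "min_poly_deg A = (LEAST d. \<exists>p\<in>monic_deg d. poly_mat p A = 0)"

definition grade :: "real^'n^'n \<Rightarrow> real^'n \<Rightarrow> nat" where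
  "grade A v = (LEAST d. \<exists>p\<in>monic_deg d. poly_mat p A *v v = 0)"

definition krylov :: "nat \<Rightarrow> real^'n^'n \<Rightarrow> real^'n \<Rightarrow> (real^'n) set" where
  "krylov k A v = span {matpow A i *v v | i. i < k}"

definition P_poly :: "nat \<Rightarrow> real^'n^'n \<Rightarrow> real^'n \<Rightarrow> real poly" where
  "P_poly s B u = (THE p. p \<in> monic_deg s \<and>
      (\<forall>y\<in>krylov s B u. (poly_mat p B *v u) \<bullet> y = 0))"

definition normalize_vec :: "real^'n \<Rightarrow> real^'n" where
  "normalize_vec x = inverse (norm x) *\<^sub>R x"

definition aci_w :: "nat \<Rightarrow> real^'n^'n \<Rightarrow> real^'n \<Rightarrow> real^'n" where
  "aci_w s A v = normalize_vec (poly_mat (P_poly s A v) A *v v)"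

primrec aci_v :: "nat \<Rightarrow> real^'n^'n \<Rightarrow> real^'n \<Rightarrow> nat \<Rightarrow> real^'n" where
  "aci_v s A v0 0 = v0"
| "aci_v s A v0 (Suc k) =
     (let w = aci_w s A (aci_v s A v0 k)
      in normalize_vec (poly_mat (P_poly s (transpose A) w) (transpose A) *v w))"

definition aci_wseq :: "nat \<Rightarrow> real^'n^'n \<Rightarrow> real^'n \<Rightarrow> nat \<Rightarrow> real^'n" where
  "aci_wseq s A v0 k = aci_w s A (aci_v s A v0 k)"

end

theory Submission
  imports Defs
begin

text \<open>
  Write \<open>r(B,u) = P\<^sub>s(B;u)(B) u\<close>; it is the residual of projecting \<open>B\<^sup>s u\<close> onto
  \<open>K\<^sub>s(B,u)\<close>. Put \<open>z\<^sub>k = r(A,v\<^sub>k)\<close>, so \<open>w\<^sub>k = z\<^sub>k/\<parallel>z\<^sub>k\<parallel>\<close>. Since \<open>w\<^sub>k \<perp> K\<^sub>s(A,v\<^sub>k)\<close>,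
  the space \<open>K\<^sub>s(A\<^sup>T,w\<^sub>k)\<close> is orthogonal to \<open>v\<^sub>k\<close> and \<open>((A\<^sup>T)\<^sup>s w\<^sub>k) \<bullet> v\<^sub>k = \<parallel>z\<^sub>k\<parallel>\<close>; hence
  \<open>r(A\<^sup>T,w\<^sub>k) \<bullet> v\<^sub>k = \<parallel>z\<^sub>k\<parallel>\<close>, which gives \<open>v\<^sub>k\<^sub>+\<^sub>1 \<bullet> v\<^sub>k = \<parallel>z\<^sub>k\<parallel> / \<parallel>r(A\<^sup>T,w\<^sub>k)\<parallel>\<close> and, by
  Cauchy-Schwarz, \<open>\<parallel>z\<^sub>k\<parallel> \<le> \<parallel>r(A\<^sup>T,w\<^sub>k)\<parallel>\<close>. The symmetric argument for the other half step
  shows that the residual norms, taken alternately, form a nondecreasing sequence, which is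
  bounded by \<open>\<parallel>A\<^sup>s\<parallel>\<close>. It converges to a positive limit, so all the inner products of
  consecutive unit vectors tend to 1.
\<close>

lemma matpow_0 [simp]: "matpow B 0 = mat 1"
  by (simp add: matpow_def)

lemma matpow_Suc: "matpow B (Suc j) = B ** matpow B j"
  by (simp add: matpow_def)

lemma matpow_Suc_right: "matpow B (Suc j) = matpow B j ** B"
  by (induction j) (simp_all add: matpow_Suc matrix_mul_assoc)

lemma matpow_Suc_mult_vec: "matpow B (Suc j) *v u = B *v (matpow B j *v u)"
  by (simp add: matpow_Suc matrix_vector_mul_assoc)

lemma matpow_transpose: "matpow (transpose B) j = transpose (matpow B j)"
proof (induction j)
  case (Suc j)
  have "matpow (transpose B) (Suc j) = transpose B ** transpose (matpow B j)"
    using Suc by (simp add: matpow_Suc)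
  also have "\<dots> = transpose (matpow B (Suc j))"
    by (simp add: matrix_transpose_mul matpow_Suc_right)
  finally show ?case .
qed (simp add: transpose_mat)

lemma inner_matpow_transpose:
  "(matpow (transpose B) i *v w) \<bullet> u = w \<bullet> (matpow B i *v u)"
  by (simp add: matpow_transpose dot_lmul_matrix del: vector_transpose_matrix
      flip: vector_transpose_matrix)

lemma poly_mat_mult_vec:
  "poly_mat p B *v u = (\<Sum>i\<le>degree p. coeff p i *\<^sub>R (matpow B i *v u))"
proof -
  have sum_mult_vec: "(\<Sum>i\<in>I. f i) *v u = (\<Sum>i\<in>I. f i *v u)" for f I
    by (induction I rule: infinite_finite_induct) (simp_all add: matrix_vector_mult_add_rdistrib)
  show ?thesis
    unfolding poly_mat_def sum_mult_vec by (simp add: scaleR_matrix_vector_assoc)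
qed

lemma mem_krylov_iff:
  "y \<in> krylov d B u \<longleftrightarrow> (\<exists>c. y = (\<Sum>i<d. c i *\<^sub>R (matpow B i *v u)))"
proof
  assume "y \<in> krylov d B u"
  then show "\<exists>c. y = (\<Sum>i<d. c i *\<^sub>R (matpow B i *v u))"
    unfolding krylov_def
  proof (induction rule: span_induct_alt)
    case base
    show ?case by (rule exI[of _ "\<lambda>_. 0"]) simp
  next
    case (step c x y)
    then obtain e where e: "y = (\<Sum>i<d. e i *\<^sub>R (matpow B i *v u))" by blast
    from step obtain j where j: "x = matpow B j *v u" "j < d" by blast
    show ?case
      by (rule exI[of _ "\<lambda>i. e i + (if i = j then c else 0)"])
         (simp add: e j scaleR_add_left sum.distrib if_distrib[of "\<lambda>a. a *\<^sub>R _"] cong: if_cong)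
  qed
next
  assume "\<exists>c. y = (\<Sum>i<d. c i *\<^sub>R (matpow B i *v u))"
  then show "y \<in> krylov d B u"
    unfolding krylov_def
    by (metis (mono_tags, lifting) span_sum span_scale span_base lessThan_iff mem_Collect_eq)
qed

lemma matpow_mult_vec_in_krylov: "i < d \<Longrightarrow> matpow B i *v u \<in> krylov d B u"
  unfolding krylov_def by (auto intro: span_base)

lemma krylov_mono: "d \<le> s \<Longrightarrow> krylov d B u \<subseteq> krylov s B u"
  unfolding krylov_def by (rule span_mono) auto

lemma krylov_orthogonal_transpose:
  assumes "\<forall>y\<in>krylov s B u. w \<bullet> y = 0" and "y \<in> krylov s (transpose B) w"
  shows "y \<bullet> u = 0"
proof -
  obtain c where c: "y = (\<Sum>i<s. c i *\<^sub>R (matpow (transpose B) i *v w))"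
    using assms(2) by (auto simp: mem_krylov_iff)
  have "y \<bullet> u = (\<Sum>i<s. c i * (w \<bullet> (matpow B i *v u)))"
    unfolding c by (simp add: inner_sum_left inner_matpow_transpose)
  also have "\<dots> = 0"
    using assms(1) by (simp add: matpow_mult_vec_in_krylov)
  finally show ?thesis .
qed

text \<open>Once \<open>B\<^sup>d w\<close> falls into \<open>K\<^sub>d(B,w)\<close>, that space is \<open>B\<close>-invariant.\<close>

lemma matpow_mult_vec_in_stalled_krylov:
  assumes "matpow B d *v w \<in> krylov d B w"
  shows "matpow B m *v w \<in> krylov d B w"
proof (induction m)
  case 0
  show ?case
    using assms by (cases d) (auto intro: matpow_mult_vec_in_krylov[of 0, simplified])
next
  case (Suc m)
  have "B *v y \<in> krylov d B w" if y: "y \<in> krylov d B w" for y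
  proof -
    obtain c where c: "y = (\<Sum>i<d. c i *\<^sub>R (matpow B i *v w))"
      using y by (auto simp: mem_krylov_iff)
    have "B *v y = (\<Sum>i<d. c i *\<^sub>R (matpow B (Suc i) *v w))"
      unfolding c
      by (simp add: matpow_Suc_mult_vec linear_sum[OF matrix_vector_mul_linear]
          linear_scale[OF matrix_vector_mul_linear] del: scaleR_matrix_vector_assoc)
    also have "\<dots> \<in> krylov d B w"
      unfolding krylov_def
    proof (intro span_sum span_scale)
      fix i assume "i \<in> {..<d}"
      then show "matpow B (Suc i) *v w \<in> span {matpow B i *v w |i. i < d}"
        using assms unfolding krylov_def by (cases "Suc i = d") (auto intro!: span_base)
    qed
    finally show ?thesis .
  qed
  then show ?case
    using Suc by (simp add: matpow_Suc_mult_vec)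
qed

lemma poly_mat_monic_mult_vec:
  assumes "p \<in> monic_deg d"
  shows "poly_mat p B *v u = matpow B d *v u + (\<Sum>i<d. coeff p i *\<^sub>R (matpow B i *v u))"
  using assms by (auto simp: poly_mat_mult_vec monic_deg_def lessThan_Suc_atMost[symmetric])

lemma poly_mat_monic_mult_vec_diff_in_krylov:
  "p \<in> monic_deg d \<Longrightarrow> poly_mat p B *v u - matpow B d *v u \<in> krylov d B u"
  by (auto simp: poly_mat_monic_mult_vec mem_krylov_iff)

lemma monic_poly_mat_mult_vec_exists:
  "\<exists>p\<in>monic_deg d. poly_mat p B *v u = matpow B d *v u - (\<Sum>i<d. c i *\<^sub>R (matpow B i *v u))"
proof
  define p where "p = monom 1 d - (\<Sum>i<d. monom (c i) i)"
  have coeff_p: "coeff p i = (if i = d then 1 else 0) - (if i < d then c i else 0)" for i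
    by (simp add: p_def coeff_sum coeff_monom)
  have "degree p = d"
    by (intro antisym degree_le le_degree) (simp_all add: coeff_p)
  then show p: "p \<in> monic_deg d"
    by (simp add: monic_deg_def coeff_p)
  show "poly_mat p B *v u = matpow B d *v u - (\<Sum>i<d. c i *\<^sub>R (matpow B i *v u))"
    by (simp add: poly_mat_monic_mult_vec[OF p] coeff_p sum_negf[symmetric])
qed

text \<open>
  \<open>krylov_indep n B u\<close> says that \<open>u, B u, \<dots>, B\<^sup>n\<^sup>-\<^sup>1 u\<close> are linearly independent, i.e.
  that no monic polynomial of degree below \<open>n\<close> annihilates \<open>u\<close>: this is \<open>d(B,u) \<ge> n\<close>.
\<close>

definition krylov_indep :: "nat \<Rightarrow> real^'n^'n \<Rightarrow> real^'n \<Rightarrow> bool" where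
  "krylov_indep n B u \<longleftrightarrow> (\<forall>d<n. matpow B d *v u \<notin> krylov d B u)"

lemma krylov_indep_mono: "krylov_indep n B u \<Longrightarrow> m \<le> n \<Longrightarrow> krylov_indep m B u"
  by (auto simp: krylov_indep_def)

lemma krylov_indep_if_grade_ge:
  assumes "grade B u \<ge> n"
  shows "krylov_indep n B u"
  unfolding krylov_indep_def
proof (intro allI impI notI)
  fix d assume "d < n" and "matpow B d *v u \<in> krylov d B u"
  then obtain c where "matpow B d *v u = (\<Sum>i<d. c i *\<^sub>R (matpow B i *v u))"
    by (auto simp: mem_krylov_iff)
  then obtain p where "p \<in> monic_deg d" "poly_mat p B *v u = 0"
    using monic_poly_mat_mult_vec_exists[of d B u c] by auto
  then have "grade B u \<le> d"
    unfolding grade_def by (intro Least_le) blast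
  with \<open>d < n\<close> assms show False by simp
qed

lemma krylov_indep_coeffs_eq_0:
  assumes "krylov_indep n B u" "(\<Sum>i<n. e i *\<^sub>R (matpow B i *v u)) = 0"
  shows "\<forall>i<n. e i = 0"
  using assms
proof (induction n)
  case (Suc n)
  have "e n = 0"
  proof (rule ccontr)
    assume "e n \<noteq> 0"
    from Suc.prems(2) have "e n *\<^sub>R (matpow B n *v u) = - (\<Sum>i<n. e i *\<^sub>R (matpow B i *v u))"
      by (simp add: add_eq_0_iff2 add.commute)
    then have "matpow B n *v u = inverse (e n) *\<^sub>R - (\<Sum>i<n. e i *\<^sub>R (matpow B i *v u))"
      using \<open>e n \<noteq> 0\<close> by (metis scaleR_scaleR scaleR_one left_inverse)
    also have "\<dots> = (\<Sum>i<n. (- e i / e n) *\<^sub>R (matpow B i *v u))"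
      by (simp add: scaleR_sum_right sum_negf[symmetric] divide_inverse mult.commute)
    finally have "matpow B n *v u \<in> krylov n B u"
      unfolding mem_krylov_iff by (rule exI[of _ "\<lambda>i. - e i / e n"])
    then show False
      using Suc.prems(1) by (simp add: krylov_indep_def)
  qed
  with Suc.prems Suc.IH[OF krylov_indep_mono[OF Suc.prems(1)]] show ?case
    by (simp add: less_Suc_eq)
qed simp

lemma krylov_indep_Suc_if_orthogonal:
  assumes orth: "\<forall>y\<in>krylov s B w. y \<bullet> u = 0" and top: "(matpow B s *v w) \<bullet> u \<noteq> 0"
  shows "krylov_indep (Suc s) B w"
  unfolding krylov_indep_def
proof (intro allI impI notI)
  fix d assume "d < Suc s" and "matpow B d *v w \<in> krylov d B w"
  then have "matpow B s *v w \<in> krylov s B w"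
    using matpow_mult_vec_in_stalled_krylov krylov_mono[of d s] by fastforce
  with orth top show False by blast
qed

lemma krylov_orthogonal_monic_exists:
  "\<exists>p\<in>monic_deg s. \<forall>y\<in>krylov s B u. (poly_mat p B *v u) \<bullet> y = 0"
proof -
  obtain y z where y: "y \<in> span (krylov s B u)"
    and z: "\<And>x. x \<in> span (krylov s B u) \<Longrightarrow> orthogonal z x"
    and decomp: "matpow B s *v u = y + z"
    using orthogonal_subspace_decomp_exists by blast
  obtain c where "y = (\<Sum>i<s. c i *\<^sub>R (matpow B i *v u))"
    using y by (auto simp: krylov_def span_span mem_krylov_iff[unfolded krylov_def])
  then obtain p where "p \<in> monic_deg s" "poly_mat p B *v u = z"
    using monic_poly_mat_mult_vec_exists[of s B u c] decomp by auto
  with z show ?thesis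
    by (auto simp: orthogonal_def krylov_def span_span)
qed

lemma krylov_orthogonal_monic_unique:
  assumes indep: "krylov_indep s B u"
    and p: "p \<in> monic_deg s" "\<forall>y\<in>krylov s B u. (poly_mat p B *v u) \<bullet> y = 0"
    and q: "q \<in> monic_deg s" "\<forall>y\<in>krylov s B u. (poly_mat q B *v u) \<bullet> y = 0"
  shows "p = q"
proof -
  let ?D = "poly_mat p B *v u - poly_mat q B *v u"
  have D: "?D = (\<Sum>i<s. (coeff p i - coeff q i) *\<^sub>R (matpow B i *v u))"
    by (simp add: poly_mat_monic_mult_vec[OF p(1)] poly_mat_monic_mult_vec[OF q(1)]
        scaleR_diff_left sum_subtractf)
  then have "?D \<in> krylov s B u"
    unfolding mem_krylov_iff by (rule exI[of _ "\<lambda>i. coeff p i - coeff q i"])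
  with p(2) q(2) have "?D \<bullet> ?D = 0"
    by (simp add: inner_diff_left)
  with D have "\<forall>i<s. coeff p i - coeff q i = 0"
    by (intro krylov_indep_coeffs_eq_0[OF indep]) simp
  moreover have "coeff p i = coeff q i" if "i \<ge> s" for i
    using p(1) q(1) that by (cases "i = s") (auto simp: monic_deg_def coeff_eq_0)
  ultimately show ?thesis
    by (metis poly_eqI eq_iff_diff_eq_0 not_less)
qed

lemma P_poly_spec:
  assumes "krylov_indep s B u"
  shows "P_poly s B u \<in> monic_deg s"
    and "\<forall>y\<in>krylov s B u. (poly_mat (P_poly s B u) B *v u) \<bullet> y = 0"
proof -
  have "\<exists>!p. p \<in> monic_deg s \<and> (\<forall>y\<in>krylov s B u. (poly_mat p B *v u) \<bullet> y = 0)"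
    using krylov_orthogonal_monic_exists krylov_orthogonal_monic_unique[OF assms] by blast
  then have "P_poly s B u \<in> monic_deg s \<and>
      (\<forall>y\<in>krylov s B u. (poly_mat (P_poly s B u) B *v u) \<bullet> y = 0)"
    unfolding P_poly_def by (rule theI')
  then show "P_poly s B u \<in> monic_deg s"
    and "\<forall>y\<in>krylov s B u. (poly_mat (P_poly s B u) B *v u) \<bullet> y = 0"
    by blast+
qed

definition krylov_residual :: "nat \<Rightarrow> real^'n^'n \<Rightarrow> real^'n \<Rightarrow> real^'n" where
  "krylov_residual s B u = poly_mat (P_poly s B u) B *v u"

lemma krylov_residual_minus_matpow_in_krylov:
  "krylov_indep s B u \<Longrightarrow> krylov_residual s B u - matpow B s *v u \<in> krylov s B u"
  unfolding krylov_residual_def by (intro poly_mat_monic_mult_vec_diff_in_krylov P_poly_spec)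

lemma krylov_residual_orthogonal:
  "krylov_indep s B u \<Longrightarrow> y \<in> krylov s B u \<Longrightarrow> krylov_residual s B u \<bullet> y = 0"
  unfolding krylov_residual_def using P_poly_spec(2) by blast

lemma inner_krylov_residual_matpow:
  assumes "krylov_indep s B u"
  shows "krylov_residual s B u \<bullet> (matpow B s *v u) = (norm (krylov_residual s B u))\<^sup>2"
  using krylov_residual_orthogonal[OF assms krylov_residual_minus_matpow_in_krylov[OF assms]]
  by (simp add: inner_diff_right power2_norm_eq_inner)

lemma krylov_residual_inner_if_orthogonal:
  assumes "krylov_indep s B w" and "\<forall>y\<in>krylov s B w. y \<bullet> u = 0"
  shows "krylov_residual s B w \<bullet> u = (matpow B s *v w) \<bullet> u"
proof -
  have "(krylov_residual s B w - matpow B s *v w) \<bullet> u = 0"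
    using assms krylov_residual_minus_matpow_in_krylov[OF assms(1)] by blast
  then show ?thesis
    by (simp add: inner_diff_left)
qed

lemma krylov_residual_nonzero:
  assumes "krylov_indep (Suc s) B u"
  shows "krylov_residual s B u \<noteq> 0"
proof
  assume "krylov_residual s B u = 0"
  then have "- (matpow B s *v u) \<in> krylov s B u"
    using krylov_residual_minus_matpow_in_krylov[OF krylov_indep_mono[OF assms, of s]] by simp
  then have "matpow B s *v u \<in> krylov s B u"
    unfolding krylov_def using span_neg by fastforce
  with assms show False
    by (simp add: krylov_indep_def)
qed

lemma norm_krylov_residual_le:
  assumes "krylov_indep s B u"
  shows "norm (krylov_residual s B u) \<le> norm (matpow B s *v u)"
proof -
  let ?r = "krylov_residual s B u"
  have "norm ?r * norm ?r \<le> norm ?r * norm (matpow B s *v u)"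
    using inner_krylov_residual_matpow[OF assms] Cauchy_Schwarz_ineq2[of ?r "matpow B s *v u"]
    by (simp add: power2_eq_square)
  then show ?thesis
    by (cases "?r = 0") simp_all
qed

lemma aci_half_step:
  fixes B :: "real^'n^'n"
  assumes indep: "krylov_indep (Suc s) B u" and unit: "norm u = 1"
  defines "z \<equiv> krylov_residual s B u"
  defines "w \<equiv> normalize_vec z"
  defines "z' \<equiv> krylov_residual s (transpose B) w"
  shows "norm w = 1" and "krylov_indep (Suc s) (transpose B) w"
    and "0 < norm z" and "norm z \<le> norm z'" and "normalize_vec z' \<bullet> u = norm z / norm z'"
proof -
  have indep_s: "krylov_indep s B u"
    using krylov_indep_mono[OF indep] by simp
  have "z \<noteq> 0"
    using krylov_residual_nonzero[OF indep] by (simp add: z_def)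
  then show "0 < norm z" and "norm w = 1"
    by (simp_all add: w_def normalize_vec_def)
  have w_inner: "w \<bullet> x = (z \<bullet> x) / norm z" for x
    by (simp add: w_def normalize_vec_def divide_inverse mult.commute)
  have "\<forall>y\<in>krylov s B u. w \<bullet> y = 0"
    using krylov_residual_orthogonal[OF indep_s] by (simp add: w_inner z_def)
  then have orth: "\<forall>y\<in>krylov s (transpose B) w. y \<bullet> u = 0"
    using krylov_orthogonal_transpose by blast
  have top: "(matpow (transpose B) s *v w) \<bullet> u = norm z"
    using inner_krylov_residual_matpow[OF indep_s] \<open>z \<noteq> 0\<close>
    by (simp add: inner_matpow_transpose w_inner z_def power2_eq_square)
  show indep': "krylov_indep (Suc s) (transpose B) w"
    using krylov_indep_Suc_if_orthogonal[OF orth] top \<open>z \<noteq> 0\<close> by simp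
  have cross: "z' \<bullet> u = norm z"
    using krylov_residual_inner_if_orthogonal[OF krylov_indep_mono[OF indep'] orth] top
    by (simp add: z'_def)
  show "norm z \<le> norm z'"
    using Cauchy_Schwarz_ineq2[of z' u] cross unit by simp
  show "normalize_vec z' \<bullet> u = norm z / norm z'"
    using cross by (simp add: normalize_vec_def divide_inverse mult.commute)
qed

lemma aci_wseq_eq: "aci_wseq s A v0 k = normalize_vec (krylov_residual s A (aci_v s A v0 k))"
  by (simp add: aci_wseq_def aci_w_def krylov_residual_def)

lemma aci_v_Suc_eq:
  "aci_v s A v0 (Suc k) = normalize_vec (krylov_residual s (transpose A) (aci_wseq s A v0 k))"
  by (simp add: aci_wseq_def aci_w_def krylov_residual_def Let_def)

lemma aci_v_invariant:
  assumes "norm v0 = 1" and "krylov_indep (Suc s) A v0"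
  shows "norm (aci_v s A v0 k) = 1 \<and> krylov_indep (Suc s) A (aci_v s A v0 k)"
proof (induction k)
  case (Suc k)
  then show ?case
    using aci_half_step[of s A "aci_v s A v0 k"]
      aci_half_step[of s "transpose A" "aci_wseq s A v0 k"]
    by (simp add: aci_wseq_eq[symmetric] aci_v_Suc_eq[symmetric])
qed (use assms in simp)

lemma interleaved_ratios_tendsto_1:
  fixes a b :: "nat \<Rightarrow> real"
  assumes "a 0 > 0" and "\<And>k. a k \<le> b k" and "\<And>k. b k \<le> a (Suc k)" and "\<And>k. a k \<le> K"
  shows "(\<lambda>k. a k / b k) \<longlonglongrightarrow> 1" and "(\<lambda>k. b k / a (Suc k)) \<longlonglongrightarrow> 1"
proof -
  have "incseq a"
    using assms(2,3) order_trans by (blast intro: incseq_SucI)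
  moreover have "bdd_above (range a)"
    using assms(4) by (intro bdd_aboveI[of _ K]) auto
  ultimately have a_lim: "a \<longlonglongrightarrow> (SUP i. a i)" and "a 0 \<le> (SUP i. a i)"
    by (auto intro: LIMSEQ_incseq_SUP cSUP_upper)
  then have nonzero: "(SUP i. a i) \<noteq> 0"
    using assms(1) by simp
  have a_Suc_lim: "(\<lambda>k. a (Suc k)) \<longlonglongrightarrow> (SUP i. a i)"
    using a_lim by (rule LIMSEQ_Suc)
  have b_lim: "b \<longlonglongrightarrow> (SUP i. a i)"
    by (rule tendsto_sandwich[OF _ _ a_lim a_Suc_lim]) (simp_all add: assms(2,3))
  show "(\<lambda>k. a k / b k) \<longlonglongrightarrow> 1"
    using tendsto_divide[OF a_lim b_lim nonzero] nonzero by simp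
  show "(\<lambda>k. b k / a (Suc k)) \<longlonglongrightarrow> 1"
    using tendsto_divide[OF b_lim a_Suc_lim nonzero] nonzero by simp
qed

lemma norm_diff_unit_vectors:
  fixes x y :: "'a::real_inner"
  assumes "norm x = 1" and "norm y = 1"
  shows "norm (x - y) = sqrt (2 - 2 * (x \<bullet> y))"
proof -
  have "x \<bullet> x = 1" and "y \<bullet> y = 1"
    using assms by (simp_all flip: power2_norm_eq_inner)
  then have "(norm (x - y))\<^sup>2 = 2 - 2 * (x \<bullet> y)"
    by (simp add: power2_norm_eq_inner inner_diff_left inner_diff_right inner_commute[of y x])
  then show ?thesis
    by (metis norm_ge_zero real_sqrt_unique)
qed

lemma unit_vectors_dist_Suc_tendsto_0:
  fixes x :: "nat \<Rightarrow> 'a::real_inner"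
  assumes "\<And>k. norm (x k) = 1" and "(\<lambda>k. x (Suc k) \<bullet> x k) \<longlonglongrightarrow> 1"
  shows "(\<lambda>k. norm (x (Suc k) - x k)) \<longlonglongrightarrow> 0"
proof -
  have "(\<lambda>k. sqrt (2 - 2 * (x (Suc k) \<bullet> x k))) \<longlonglongrightarrow> sqrt (2 - 2 * 1)"
    by (intro tendsto_intros assms(2))
  then show ?thesis
    by (simp add: norm_diff_unit_vectors assms(1))
qed

theorem theorem3p4:
  fixes A :: "real^'n^'n" and s :: nat and v0 :: "real^'n"
  assumes "1 \<le> s" and "s < min_poly_deg A"
    and "norm v0 = 1" and "grade A v0 \<ge> s + 1"
  shows "(\<lambda>k. norm (aci_wseq s A v0 (Suc k) - aci_wseq s A v0 k)) \<longlonglongrightarrow> 0 \<and>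
         (\<lambda>k. norm (aci_v s A v0 (Suc k) - aci_v s A v0 k)) \<longlonglongrightarrow> 0"
proof -
  define v where "v = aci_v s A v0"
  define w where "w = aci_wseq s A v0"
  define a where "a k = norm (krylov_residual s A (v k))" for k
  define b where "b k = norm (krylov_residual s (transpose A) (w k))" for k
  have v: "norm (v k) = 1" "krylov_indep (Suc s) A (v k)" for k
    using aci_v_invariant[OF assms(3) krylov_indep_if_grade_ge] assms(4) by (simp_all add: v_def)
  have w_eq: "w k = normalize_vec (krylov_residual s A (v k))" for k
    by (simp add: v_def w_def aci_wseq_eq)
  have v_Suc: "v (Suc k) = normalize_vec (krylov_residual s (transpose A) (w k))" for k
    unfolding v_def w_def by (rule aci_v_Suc_eq)
  have w: "norm (w k) = 1" "krylov_indep (Suc s) (transpose A) (w k)" for k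
    using aci_half_step(1,2)[OF v(2) v(1)] by (simp_all add: w_eq)
  have a_b: "0 < a k" "a k \<le> b k" "v (Suc k) \<bullet> v k = a k / b k" for k
    using aci_half_step(3-5)[OF v(2) v(1)] by (simp_all add: a_def b_def w_eq v_Suc)
  have b_a: "b k \<le> a (Suc k)" "w (Suc k) \<bullet> w k = b k / a (Suc k)" for k
    using aci_half_step(4,5)[OF w(2) w(1)] by (simp_all add: a_def b_def w_eq v_Suc)
  have a_bounded: "a k \<le> onorm ((*v) (matpow A s))" for k
    using norm_krylov_residual_le[OF krylov_indep_mono[OF v(2)], of s k]
      onorm[OF matrix_vector_mul_bounded_linear, of "matpow A s" "v k"]
    by (simp add: a_def v(1))
  have "(\<lambda>k. a k / b k) \<longlonglongrightarrow> 1" and "(\<lambda>k. b k / a (Suc k)) \<longlonglongrightarrow> 1"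
    using interleaved_ratios_tendsto_1[of a b, OF a_b(1) a_b(2) b_a(1) a_bounded] by simp_all
  then show ?thesis
    using unit_vectors_dist_Suc_tendsto_0[of v] unit_vectors_dist_Suc_tendsto_0[of w]
      v(1) w(1) a_b(3) b_a(2) by (simp add: v_def w_def)
qed

end
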